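(* Let $T$ be a finite rooted tree with root $\rho$, vertex set $V$, arc set $A_T$ (arcs directed away from the root) and leaf set $X$. For $j=1,\dots,k$ let $\xi_j$ be a two-state Markov process on $T$ with state space $\{0,1\}$, root distribution $\pi^{(j)}_0,\pi^{(j)}_1>0$, and $2\times 2$ transition matrices $P^{(j)}(r,s)$ on the arcs $(r,s)\in A_T$, and suppose $\det P^{(j)}(r,s)\ge 0$ for every arc $(r,s)$ and every $j$. Suppose the $k$ processes are independent, and let $\boldsymbol{\xi}=(\xi_1,\dots,\xi_k)$ be the corresponding multivariate process with state space $\{0,1\}^k$. Fix a non-empty subset $W\subseteq X$, and for a function $\mathbf{u}\colon W\to\{0,1\}^k$ let $p(\mathbf{u})$ be the probability that $\boldsymbol{\xi}(v)=\mathbf{u}(v)$ for every $v\in W$. Then for any two functions $\mathbf{y},\mathbf{z}\colon W\to\{0,1\}^k$, $$p(\mathbf{y})\,p(\mathbf{z})\le p(\mathbf{y}\vee\mathbf{z})\,p(\mathbf{y}\wedge\mathbf{z}),$$ where $\mathbf{y}\vee\mathbf{z}$ and $\mathbf{y}\wedge\mathbf{z}$ are the functions $W\to\{0,1\}^k$ given coordinatewise by $(\mathbf{y}\vee\mathbf{z})_j(v)=\max\{y_j(v),z_j(v)\}$ and $(\mathbf{y}\wedge\mathbf{z})_j(v)=\min\{y_j(v),z_j(v)\}$ for $v\in W$, $j=1,\dots,k$.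
   Context: A two-state Markov process on a rooted tree $T$ assigns a random state $\xi(v)\in\{0,1\}$ to each vertex: $\xi(\rho)=i$ with probability $\pi_i$, and for each arc $(r,s)$ the entry $P(r,s)_{il}$ is the conditional probability that $\xi(s)=l$ given $\xi(r)=i$, the states being generated along the arcs with the Markov property (so the probability of a full assignment $U\colon V\to\{0,1\}$ is $\pi_{U(\rho)}\prod_{(r,s)\in A_T}P(r,s)_{U(r)U(s)}$). The multivariate process $\boldsymbol{\xi}$ assigns to each vertex $v$ the vector $(\xi_1(v),\dots,\xi_k(v))$; its root distribution is $\pi_{\mathbf{i}}=\prod_j\pi^{(j)}_{i_j}$ and its transition probabilities are $\prod_j P^{(j)}(r,s)_{i_jl_j}$. The processes need not be identical, and different arcs may carry different transition matrices. *)

theory Defs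
  imports Complex_Main "HOL-Library.FuncSet"
begin

text \<open>A finite rooted tree on vertex set V with root rho, encoded by a parent
  function par: every non-root vertex v has parent par v in V, and iterating
  par from any vertex eventually reaches the root (connected, acyclic).\<close>
definition rooted_tree :: "'a set \<Rightarrow> 'a \<Rightarrow> ('a \<Rightarrow> 'a) \<Rightarrow> bool" where
  "rooted_tree V rho par \<longleftrightarrow> finite V \<and> rho \<in> V \<and>
     (\<forall>v \<in> V - {rho}. par v \<in> V \<and> (\<exists>n. (par ^^ n) v = rho))"

definition arcs :: "'a set \<Rightarrow> 'a \<Rightarrow> ('a \<Rightarrow> 'a) \<Rightarrow> ('a \<times> 'a) set" where
  "arcs V rho par = {(par v, v) | v. v \<in> V - {rho}}"

definition leaves :: "'a set \<Rightarrow> 'a \<Rightarrow> ('a \<Rightarrow> 'a) \<Rightarrow> 'a set" where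
  "leaves V rho par = {v \<in> V. \<not> (\<exists>s. (v, s) \<in> arcs V rho par)}"

definition stochastic2 :: "(nat \<Rightarrow> nat \<Rightarrow> real) \<Rightarrow> bool" where
  "stochastic2 M \<longleftrightarrow> (\<forall>i\<in>{0,1}. \<forall>l\<in>{0,1}. M i l \<ge> 0) \<and> (\<forall>i\<in>{0,1}. M i 0 + M i 1 = 1)"

definition det2 :: "(nat \<Rightarrow> nat \<Rightarrow> real) \<Rightarrow> real" where
  "det2 M = M 0 0 * M 1 1 - M 0 1 * M 1 0"

definition states :: "nat \<Rightarrow> (nat \<Rightarrow> nat) set" where
  "states k = {0..<k} \<rightarrow>\<^sub>E {0,1}"

definition assign_prob ::
  "nat \<Rightarrow> 'a set \<Rightarrow> 'a \<Rightarrow> ('a \<Rightarrow> 'a) \<Rightarrow> (nat \<Rightarrow> nat \<Rightarrow> real)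
   \<Rightarrow> (nat \<Rightarrow> 'a \<Rightarrow> 'a \<Rightarrow> nat \<Rightarrow> nat \<Rightarrow> real) \<Rightarrow> ('a \<Rightarrow> nat \<Rightarrow> nat) \<Rightarrow> real" where
  "assign_prob k V rho par rd P U =
     (\<Prod>j<k. rd j (U rho j)) *
     (\<Prod>e\<in>arcs V rho par. \<Prod>j<k. P j (fst e) (snd e) (U (fst e) j) (U (snd e) j))"

definition marg_prob ::
  "nat \<Rightarrow> 'a set \<Rightarrow> 'a \<Rightarrow> ('a \<Rightarrow> 'a) \<Rightarrow> (nat \<Rightarrow> nat \<Rightarrow> real)
   \<Rightarrow> (nat \<Rightarrow> 'a \<Rightarrow> 'a \<Rightarrow> nat \<Rightarrow> nat \<Rightarrow> real) \<Rightarrow> 'a set \<Rightarrow> ('a \<Rightarrow> nat \<Rightarrow> nat) \<Rightarrow> real" where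
  "marg_prob k V rho par rd P W u =
     (\<Sum>U \<in> {U \<in> V \<rightarrow>\<^sub>E states k. \<forall>v\<in>W. U v = u v}. assign_prob k V rho par rd P U)"

definition join :: "nat \<Rightarrow> 'a set \<Rightarrow> ('a \<Rightarrow> nat \<Rightarrow> nat) \<Rightarrow> ('a \<Rightarrow> nat \<Rightarrow> nat) \<Rightarrow> ('a \<Rightarrow> nat \<Rightarrow> nat)" where
  "join k W y z = (\<lambda>v\<in>W. \<lambda>j\<in>{0..<k}. max (y v j) (z v j))"

definition meet :: "nat \<Rightarrow> 'a set \<Rightarrow> ('a \<Rightarrow> nat \<Rightarrow> nat) \<Rightarrow> ('a \<Rightarrow> nat \<Rightarrow> nat) \<Rightarrow> ('a \<Rightarrow> nat \<Rightarrow> nat)" where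
  "meet k W y z = (\<lambda>v\<in>W. \<lambda>j\<in>{0..<k}. min (y v j) (z v j))"

end

theory Submission imports Defs begin

text \<open>Encode an assignment of the multivariate process by the set of pairs (vertex, coordinate)
  carrying state 1; then coordinatewise max and min become union and intersection. The joint
  law of a full assignment is a product of root and arc factors, each of which satisfies
  \<open>f(a) f(b) \<le> f(a \<or> b) f(a \<and> b)\<close> because a 2x2 stochastic matrix with nonnegative
  determinant is totally positive of order 2. Hence the joint law is log-supermodular on the
  Boolean lattice, and the Ahlswede--Daykin four functions theorem transfers the inequality to
  the marginals on W, which are sums of the joint law over subsets with prescribed values on W.\<close>

lemma four_functions_two_point:
  fixes x0 x1 y0 y1 z0 z1 w0 w1 :: real
  assumes nn: "0\<le>x0" "0\<le>x1" "0\<le>y0" "0\<le>y1" "0\<le>z0" "0\<le>z1" "0\<le>w0" "0\<le>w1"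
    and h00: "x0*y0 \<le> z0*w0" and h01: "x0*y1 \<le> z1*w0" and h10: "x1*y0 \<le> z1*w0"
    and h11: "x1*y1 \<le> z1*w1"
  shows "(x0+x1)*(y0+y1) \<le> (z0+z1)*(w0+w1)"
proof (cases "z1*w0 = 0")
  case True
  have "0 \<le> x0*y1" "0 \<le> x1*y0" using nn by auto
  then have "x0*y1 = 0" "x1*y0 = 0" using h01 h10 True by linarith+
  moreover have "0 \<le> z0*w1" "0 \<le> z1*w0" using nn by auto
  moreover have "(x0+x1)*(y0+y1) = x0*y0 + x0*y1 + x1*y0 + x1*y1"
     "(z0+z1)*(w0+w1) = z0*w0 + z0*w1 + z1*w0 + z1*w1" by (simp_all add: algebra_simps)
  ultimately show ?thesis using h00 h11 by linarith
next
  case False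
  define t where "t = z1*w0"
  define p where "p = x0*y1"
  define q where "q = x1*y0"
  have t_pos: "t > 0" using False nn unfolding t_def by (simp add: less_le)
  \<comment> \<open>\<open>p, q \<le> t\<close> and \<open>p q \<le> t (z0 w1)\<close> give \<open>t (p + q) \<le> t\<^sup>2 + p q \<le> t (t + z0 w1)\<close>.\<close>
  have "(t-p)*(t-q) \<ge> 0" using h01 h10 unfolding t_def p_def q_def by simp
  hence sum_bound: "t*(p+q) \<le> t*t + p*q" by (simp add: algebra_simps)
  have "(x0*y0)*(x1*y1) \<le> (z0*w0)*(z1*w1)"
    using h00 h11 nn by (rule_tac mult_mono) (auto intro: mult_nonneg_nonneg)
  hence prod_bound: "p*q \<le> t*(z0*w1)" unfolding p_def q_def t_def by (simp add: algebra_simps)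
  have "t*((x0+x1)*(y0+y1)) = t*(x0*y0) + t*(p+q) + t*(x1*y1)"
    unfolding p_def q_def by (simp add: algebra_simps)
  also have "\<dots> \<le> t*(z0*w0) + (t*t + t*(z0*w1)) + t*(z1*w1)"
    using sum_bound prod_bound h00 h11 t_pos by (simp add: add_mono)
  also have "\<dots> = t*((z0+z1)*(w0+w1))" unfolding t_def by (simp add: algebra_simps)
  finally show ?thesis using t_pos by simp
qed

lemma sum_Pow_insert:
  assumes "finite I" "i \<notin> I"
  shows "(\<Sum>A\<in>Pow (insert i I). f A) = (\<Sum>A\<in>Pow I. f A + f (insert i A))"
proof -
  have disj: "Pow I \<inter> insert i ` Pow I = {}" using assms by auto
  have inj: "inj_on (insert i) (Pow I)" using assms by (auto simp: inj_on_def)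
  show ?thesis
    unfolding Pow_insert sum.distrib
    using assms disj by (subst sum.union_disjoint) (auto simp: sum.reindex[OF inj])
qed

theorem four_functions:
  fixes a b c d :: "'b set \<Rightarrow> real"
  assumes "finite I"
    and "\<And>A. A \<subseteq> I \<Longrightarrow> 0 \<le> a A \<and> 0 \<le> b A \<and> 0 \<le> c A \<and> 0 \<le> d A"
    and "\<And>A B. A \<subseteq> I \<Longrightarrow> B \<subseteq> I \<Longrightarrow> a A * b B \<le> c (A \<union> B) * d (A \<inter> B)"
  shows "(\<Sum>A\<in>Pow I. a A) * (\<Sum>A\<in>Pow I. b A) \<le> (\<Sum>A\<in>Pow I. c A) * (\<Sum>A\<in>Pow I. d A)"
  using assms
proof (induction I arbitrary: a b c d rule: finite_induct)
  case empty
  then show ?case by simp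
next
  case (insert i I)
  let ?a = "\<lambda>A. a A + a (insert i A)"
  let ?b = "\<lambda>A. b A + b (insert i A)"
  let ?c = "\<lambda>A. c A + c (insert i A)"
  let ?d = "\<lambda>A. d A + d (insert i A)"
  have "(\<Sum>A\<in>Pow I. ?a A) * (\<Sum>A\<in>Pow I. ?b A) \<le> (\<Sum>A\<in>Pow I. ?c A) * (\<Sum>A\<in>Pow I. ?d A)"
  proof (rule insert.IH)
    fix A assume "A \<subseteq> I"
    then have "A \<subseteq> insert i I" "insert i A \<subseteq> insert i I" by auto
    then show "0 \<le> ?a A \<and> 0 \<le> ?b A \<and> 0 \<le> ?c A \<and> 0 \<le> ?d A"
      using insert.prems(1)[of A] insert.prems(1)[of "insert i A"] by auto
  next
    fix A B assume A: "A \<subseteq> I" and B: "B \<subseteq> I"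
    have i_notin: "i \<notin> A" "i \<notin> B" using A B insert.hyps by auto
    have subs: "A \<subseteq> insert i I" "B \<subseteq> insert i I" "insert i A \<subseteq> insert i I"
      "insert i B \<subseteq> insert i I" "A \<union> B \<subseteq> insert i I" "A \<inter> B \<subseteq> insert i I"
      "insert i (A \<union> B) \<subseteq> insert i I" "insert i (A \<inter> B) \<subseteq> insert i I"
      using A B by auto
    show "?a A * ?b B \<le> ?c (A \<union> B) * ?d (A \<inter> B)"
    proof (rule four_functions_two_point)
      show "a A * b B \<le> c (A \<union> B) * d (A \<inter> B)"
        using insert.prems(2) subs by blast
      show "a A * b (insert i B) \<le> c (insert i (A \<union> B)) * d (A \<inter> B)"
        using insert.prems(2)[of A "insert i B"] subs i_notin by simp
      show "a (insert i A) * b B \<le> c (insert i (A \<union> B)) * d (A \<inter> B)"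
        using insert.prems(2)[of "insert i A" B] subs i_notin by simp
      show "a (insert i A) * b (insert i B) \<le> c (insert i (A \<union> B)) * d (insert i (A \<inter> B))"
        using insert.prems(2)[of "insert i A" "insert i B"] subs by simp
    qed (use insert.prems(1) subs in auto)
  qed
  then show ?case using insert.hyps by (simp add: sum_Pow_insert)
qed

lemma rooted_tree_arcs:
  assumes "rooted_tree V rho par"
  shows "finite (arcs V rho par)" "arcs V rho par \<subseteq> V \<times> V"
proof -
  have "arcs V rho par = (\<lambda>v. (par v, v)) ` (V - {rho})" unfolding arcs_def by auto
  then show "finite (arcs V rho par)" using assms unfolding rooted_tree_def by simp
  show "arcs V rho par \<subseteq> V \<times> V" using assms unfolding arcs_def rooted_tree_def by auto
qed

definition nonneg_mult_le :: "real \<Rightarrow> real \<Rightarrow> real \<Rightarrow> real \<Rightarrow> bool" where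
  "nonneg_mult_le a b c d \<longleftrightarrow> 0 \<le> a \<and> 0 \<le> b \<and> 0 \<le> c \<and> 0 \<le> d \<and> a*b \<le> c*d"

lemma nonneg_mult_le_mult:
  assumes "nonneg_mult_le a b c d" "nonneg_mult_le a' b' c' d'"
  shows "nonneg_mult_le (a*a') (b*b') (c*c') (d*d')"
proof -
  have "(a*b)*(a'*b') \<le> (c*d)*(c'*d')"
    using assms unfolding nonneg_mult_le_def by (rule_tac mult_mono) auto
  then show ?thesis using assms unfolding nonneg_mult_le_def by (simp add: algebra_simps)
qed

lemma nonneg_mult_le_prod:
  "finite S \<Longrightarrow> (\<And>i. i \<in> S \<Longrightarrow> nonneg_mult_le (f i) (g i) (h i) (l i)) \<Longrightarrow>
   nonneg_mult_le (prod f S) (prod g S) (prod h S) (prod l S)"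
  by (induction S rule: finite_induct)
    (auto simp: nonneg_mult_le_mult, simp add: nonneg_mult_le_def)

lemma nonneg_mult_le_tp2:
  assumes "\<forall>i\<in>{0,1}. \<forall>l\<in>{0,1}. M i l \<ge> 0" "det2 M \<ge> 0"
    and "a\<in>{0,1}" "b\<in>{0,1}" "c\<in>{0,1}" "d\<in>{0,1}"
  shows "nonneg_mult_le (M a c) (M b d) (M (max a b) (max c d)) (M (min a b) (min c d))"
  using assms unfolding nonneg_mult_le_def det2_def by (auto simp: algebra_simps)

lemma nonneg_mult_le_max_min:
  assumes "0 \<le> r 0" "0 \<le> r 1" "a\<in>{0,1::nat}" "b\<in>{0,1}"
  shows "nonneg_mult_le (r a) (r b) (r (max a b)) (r (min a b))"
  using assms unfolding nonneg_mult_le_def by (auto simp: algebra_simps)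

lemma assign_prob_mtp2:
  assumes tree: "rooted_tree V rho par"
    and rd: "\<And>j. j<k \<Longrightarrow> 0 \<le> rd j 0 \<and> 0 \<le> rd j 1"
    and stoch: "\<And>j r s. j<k \<Longrightarrow> (r,s)\<in>arcs V rho par \<Longrightarrow> stochastic2 (P j r s)"
    and det: "\<And>j r s. j<k \<Longrightarrow> (r,s)\<in>arcs V rho par \<Longrightarrow> det2 (P j r s) \<ge> 0"
    and U: "\<And>v j. v\<in>V \<Longrightarrow> j<k \<Longrightarrow> Ua v j \<in> {0,1} \<and> Ub v j \<in> {0,1} \<and>
               Umax v j = max (Ua v j) (Ub v j) \<and> Umin v j = min (Ua v j) (Ub v j)"
  shows "nonneg_mult_le (assign_prob k V rho par rd P Ua) (assign_prob k V rho par rd P Ub)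
           (assign_prob k V rho par rd P Umax) (assign_prob k V rho par rd P Umin)"
  unfolding assign_prob_def
proof (intro nonneg_mult_le_mult nonneg_mult_le_prod finite_lessThan rooted_tree_arcs(1)[OF tree])
  have rho: "rho \<in> V" using tree unfolding rooted_tree_def by simp
  fix j assume "j \<in> {..<k}"
  then show "nonneg_mult_le (rd j (Ua rho j)) (rd j (Ub rho j)) (rd j (Umax rho j)) (rd j (Umin rho j))"
    using U[OF rho, of j] rd[of j] by (simp add: nonneg_mult_le_max_min del: insert_iff)
next
  fix e j assume e: "e \<in> arcs V rho par" and j: "j \<in> {..<k}"
  obtain r s where rs: "e = (r,s)" by force
  have rs_V: "r \<in> V" "s \<in> V" using rooted_tree_arcs(2)[OF tree] e rs by auto
  have "\<forall>i\<in>{0,1}. \<forall>l\<in>{0,1}. 0 \<le> P j r s i l" "0 \<le> det2 (P j r s)"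
    using stoch[of j r s] det[of j r s] e rs j unfolding stochastic2_def by auto
  then show "nonneg_mult_le (P j (fst e) (snd e) (Ua (fst e) j) (Ua (snd e) j))
      (P j (fst e) (snd e) (Ub (fst e) j) (Ub (snd e) j))
      (P j (fst e) (snd e) (Umax (fst e) j) (Umax (snd e) j))
      (P j (fst e) (snd e) (Umin (fst e) j) (Umin (snd e) j))"
    using U[OF rs_V(1), of j] U[OF rs_V(2), of j] j rs
    by (simp add: nonneg_mult_le_tp2 del: insert_iff)
qed

definition assign_of_set :: "'a set \<Rightarrow> nat \<Rightarrow> ('a \<times> nat) set \<Rightarrow> 'a \<Rightarrow> nat \<Rightarrow> nat" where
  "assign_of_set V k S = (\<lambda>v\<in>V. \<lambda>j\<in>{0..<k}. if (v,j) \<in> S then 1 else 0)"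

lemma assign_of_set_bij: "bij_betw (assign_of_set V k) (Pow (V \<times> {0..<k})) (V \<rightarrow>\<^sub>E states k)"
proof (rule bij_betw_byWitness[where f' = "\<lambda>U. {(v,j). v \<in> V \<and> j < k \<and> U v j = 1}"])
  show "\<forall>S\<in>Pow (V \<times> {0..<k}).
      {(v, j). v \<in> V \<and> j < k \<and> assign_of_set V k S v j = 1} = S"
    by (auto simp: assign_of_set_def split: if_splits)
  show "\<forall>U\<in>V \<rightarrow>\<^sub>E states k. assign_of_set V k {(v, j). v \<in> V \<and> j < k \<and> U v j = 1} = U"
  proof (intro ballI ext)
    fix U v j assume U: "U \<in> V \<rightarrow>\<^sub>E states k"
    show "assign_of_set V k {(v, j). v \<in> V \<and> j < k \<and> U v j = 1} v j = U v j"
    proof (cases "v \<in> V \<and> j < k")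
      case True
      then have "U v j \<in> {0,1}" using U by (auto simp: states_def PiE_iff)
      then show ?thesis using True by (auto simp: assign_of_set_def)
    next
      case False
      then show ?thesis using U
        by (auto simp: assign_of_set_def states_def PiE_iff extensional_def)
    qed
  qed
  show "assign_of_set V k ` Pow (V \<times> {0..<k}) \<subseteq> V \<rightarrow>\<^sub>E states k"
    by (auto simp: assign_of_set_def states_def split: if_splits)
  show "(\<lambda>U. {(v,j). v \<in> V \<and> j < k \<and> U v j = 1}) ` (V \<rightarrow>\<^sub>E states k)
      \<subseteq> Pow (V \<times> {0..<k})"
    by auto
qed

lemma marg_prob_sum_Pow:
  assumes "finite V"
  shows "marg_prob k V rho par rd P W u = (\<Sum>S\<in>Pow (V \<times> {0..<k}).
     if \<forall>v\<in>W. assign_of_set V k S v = u v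
     then assign_prob k V rho par rd P (assign_of_set V k S) else 0)"
proof -
  have "marg_prob k V rho par rd P W u = (\<Sum>U\<in>V \<rightarrow>\<^sub>E states k.
      if \<forall>v\<in>W. U v = u v then assign_prob k V rho par rd P U else 0)"
    unfolding marg_prob_def
    by (rule sum.inter_filter) (use assms in \<open>auto simp: states_def intro!: finite_PiE\<close>)
  also have "\<dots> = (\<Sum>S\<in>Pow (V \<times> {0..<k}).
     if \<forall>v\<in>W. assign_of_set V k S v = u v
     then assign_prob k V rho par rd P (assign_of_set V k S) else 0)"
    by (rule sum.reindex_bij_betw[OF assign_of_set_bij, symmetric])
  finally show ?thesis .
qed

lemma assign_prob_of_set_mtp2:
  assumes "rooted_tree V rho par"
    and "\<And>j. j<k \<Longrightarrow> 0 \<le> rd j 0 \<and> 0 \<le> rd j 1"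
    and "\<And>j r s. j<k \<Longrightarrow> (r,s)\<in>arcs V rho par \<Longrightarrow> stochastic2 (P j r s)"
    and "\<And>j r s. j<k \<Longrightarrow> (r,s)\<in>arcs V rho par \<Longrightarrow> det2 (P j r s) \<ge> 0"
  shows "nonneg_mult_le (assign_prob k V rho par rd P (assign_of_set V k A))
    (assign_prob k V rho par rd P (assign_of_set V k B))
    (assign_prob k V rho par rd P (assign_of_set V k (A \<union> B)))
    (assign_prob k V rho par rd P (assign_of_set V k (A \<inter> B)))"
  by (rule assign_prob_mtp2[where k=k and rd=rd and P=P, OF assms]) (auto simp: assign_of_set_def)

lemma assign_of_set_union:
  assumes "W \<subseteq> V"
    and "\<forall>v\<in>W. assign_of_set V k A v = y v" "\<forall>v\<in>W. assign_of_set V k B v = z v"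
  shows "\<forall>v\<in>W. assign_of_set V k (A \<union> B) v = join k W y z v"
proof
  fix v assume "v \<in> W"
  with assms have "v \<in> V" "y v = assign_of_set V k A v" "z v = assign_of_set V k B v" by auto
  with \<open>v \<in> W\<close> show "assign_of_set V k (A \<union> B) v = join k W y z v"
    by (auto simp: join_def assign_of_set_def intro!: restrict_ext)
qed

lemma assign_of_set_inter:
  assumes "W \<subseteq> V"
    and "\<forall>v\<in>W. assign_of_set V k A v = y v" "\<forall>v\<in>W. assign_of_set V k B v = z v"
  shows "\<forall>v\<in>W. assign_of_set V k (A \<inter> B) v = meet k W y z v"
proof
  fix v assume "v \<in> W"
  with assms have "v \<in> V" "y v = assign_of_set V k A v" "z v = assign_of_set V k B v" by auto
  with \<open>v \<in> W\<close> show "assign_of_set V k (A \<inter> B) v = meet k W y z v"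
    by (auto simp: meet_def assign_of_set_def intro!: restrict_ext)
qed

theorem proposition2p1:
  fixes V :: "'a set" and rho :: 'a and par :: "'a \<Rightarrow> 'a" and k :: nat
    and rd :: "nat \<Rightarrow> nat \<Rightarrow> real"
    and P :: "nat \<Rightarrow> 'a \<Rightarrow> 'a \<Rightarrow> nat \<Rightarrow> nat \<Rightarrow> real"
    and W :: "'a set" and y z :: "'a \<Rightarrow> nat \<Rightarrow> nat"
  assumes tree: "rooted_tree V rho par"
    and pi_pos: "\<And>j. j < k \<Longrightarrow> rd j 0 > 0 \<and> rd j 1 > 0"
    and pi_sum: "\<And>j. j < k \<Longrightarrow> rd j 0 + rd j 1 = 1"
    and P_stoch: "\<And>j r s. j < k \<Longrightarrow> (r, s) \<in> arcs V rho par \<Longrightarrow> stochastic2 (P j r s)"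
    and P_det: "\<And>j r s. j < k \<Longrightarrow> (r, s) \<in> arcs V rho par \<Longrightarrow> det2 (P j r s) \<ge> 0"
    and W_sub: "W \<subseteq> leaves V rho par"
    and W_ne: "W \<noteq> {}"
    and y: "y \<in> W \<rightarrow>\<^sub>E states k"
    and z: "z \<in> W \<rightarrow>\<^sub>E states k"
  shows "marg_prob k V rho par rd P W y * marg_prob k V rho par rd P W z
         \<le> marg_prob k V rho par rd P W (join k W y z) * marg_prob k V rho par rd P W (meet k W y z)"
proof -
  have finV: "finite V" using tree unfolding rooted_tree_def by simp
  have WV: "W \<subseteq> V" using W_sub unfolding leaves_def by auto
  have rd_nonneg: "\<And>j. j<k \<Longrightarrow> 0 \<le> rd j 0 \<and> 0 \<le> rd j 1" using pi_pos by (simp add: less_imp_le)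
  note mtp2 = assign_prob_of_set_mtp2[where k=k and rd=rd and P=P, OF tree rd_nonneg P_stoch P_det]
  define f where "f u S = (if \<forall>v\<in>W. assign_of_set V k S v = u v
    then assign_prob k V rho par rd P (assign_of_set V k S) else 0)" for u S
  have f_nonneg: "0 \<le> f u S" for u S
    using mtp2[of S S] unfolding f_def nonneg_mult_le_def by simp
  have f_mtp2: "f y A * f z B \<le> f (join k W y z) (A \<union> B) * f (meet k W y z) (A \<inter> B)" for A B
  proof (cases "(\<forall>v\<in>W. assign_of_set V k A v = y v) \<and> (\<forall>v\<in>W. assign_of_set V k B v = z v)")
    case True
    then show ?thesis
      using mtp2[of A B] assign_of_set_union[OF WV] assign_of_set_inter[OF WV]
      unfolding f_def nonneg_mult_le_def by simp
  next
    case False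
    then have "f y A * f z B = 0" unfolding f_def by auto
    then show ?thesis using f_nonneg by (metis mult_nonneg_nonneg)
  qed
  have "(\<Sum>S\<in>Pow (V \<times> {0..<k}). f y S) * (\<Sum>S\<in>Pow (V \<times> {0..<k}). f z S)
      \<le> (\<Sum>S\<in>Pow (V \<times> {0..<k}). f (join k W y z) S)
        * (\<Sum>S\<in>Pow (V \<times> {0..<k}). f (meet k W y z) S)"
    using finV f_nonneg f_mtp2 by (intro four_functions) simp_all
  then show ?thesis unfolding marg_prob_sum_Pow[OF finV] f_def .
qed

end
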